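(* Let $R$ be a ring. The following are equivalent: (a) $R$ satisfies the irreducible intersection property. (b) For every ideal $I\subsetneq R$ such that $\Sigma=\{p\in\mathrm{Spec}(R): p\subset I\}$ is nonempty, $\Sigma$ has a unique maximal element with respect to inclusion. (c) For all distinct prime ideals $p_1,p_2$ of $R$ with $p_1+p_2\neq R$, the set $\{p\in\mathrm{Spec}(R): p\subset p_1+p_2\}$ has a unique maximal element with respect to inclusion.
   Context: All rings are commutative with $1$. A ring $R$ satisfies the irreducible intersection property if for any prime ideals $p_1,p_2\subset R$, either $p_1+p_2=R$ or $p_1+p_2$ is a prime ideal. *)

theory Defs
  imports "HOL-Algebra.Algebra"
begin

definition Spec :: "('a, 'b) ring_scheme \<Rightarrow> 'a set set" where
  "Spec R = {p. primeideal p R}"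

definition irreducible_intersection_property :: "('a, 'b) ring_scheme \<Rightarrow> bool" where
  "irreducible_intersection_property R \<longleftrightarrow>
     (\<forall>p1 p2. primeideal p1 R \<longrightarrow> primeideal p2 R \<longrightarrow>
        p1 <+>\<^bsub>R\<^esub> p2 = carrier R \<or> primeideal (p1 <+>\<^bsub>R\<^esub> p2) R)"

definition has_unique_maximal :: "'a set set \<Rightarrow> bool" where
  "has_unique_maximal S \<longleftrightarrow> (\<exists>!m. m \<in> S \<and> (\<forall>x\<in>S. m \<subseteq> x \<longrightarrow> x = m))"

end

theory Submission
  imports Defs
begin

(*
  Let \<Sigma>(I) be the set of prime ideals contained in a set I.  The proof rests on
  two general facts about a commutative ring R:
  (1) Zorn: every prime p \<subseteq> I lies below a maximal element of \<Sigma>(I), because the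
      union of a nonempty chain of primes is again prime;
  (2) p1 + p2 is the least ideal containing the ideals p1 and p2.
  Then (a) \<Rightarrow> (b): two maximal elements M, N of \<Sigma>(I) have a proper sum M + N \<subseteq> I,
  which is prime by (a), hence lies in \<Sigma>(I) and equals both M and N.
  (b) \<Rightarrow> (c) is the special case I = p1 + p2.
  (c) \<Rightarrow> (a): for distinct primes with proper sum, the maximal elements above p1 and
  above p2 given by (1) coincide by uniqueness, so they contain p1 + p2 and hence
  equal it, making p1 + p2 prime; for p1 = p2 the sum is p1 itself.
*)

definition primes_below :: "('a, 'b) ring_scheme \<Rightarrow> 'a set \<Rightarrow> 'a set set" where
  "primes_below R I = {p \<in> Spec R. p \<subseteq> I}"

definition maximal_in :: "'a set set \<Rightarrow> 'a set \<Rightarrow> bool" where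
  "maximal_in S M \<longleftrightarrow> M \<in> S \<and> (\<forall>x\<in>S. M \<subseteq> x \<longrightarrow> x = M)"

lemma has_unique_maximal_iff: "has_unique_maximal S \<longleftrightarrow> (\<exists>!M. maximal_in S M)"
  unfolding has_unique_maximal_def maximal_in_def ..

lemma ideal_of_Spec: "p \<in> Spec R \<Longrightarrow> ideal p R"
  unfolding Spec_def by (auto dest: primeideal.axioms(1))

lemma primeideal_Union_chain:
  fixes R (structure)
  assumes R: "cring R" and C: "subset.chain {q. primeideal q R} C" and ne: "C \<noteq> {}"
  shows "primeideal (\<Union>C) R"
proof -
  interpret cring R by fact
  have prime: "\<And>q. q \<in> C \<Longrightarrow> primeideal q R"
    using C unfolding pred_on.chain_def by auto
  have "subset.chain {I. ideal I R} C"
    using C unfolding pred_on.chain_def by (auto dest: primeideal.axioms(1))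
  then have ideal: "ideal (\<Union>C) R"
    using chain_Union_is_ideal[of C] ne by simp
  have "\<one> \<notin> q" if "q \<in> C" for q
    using prime[OF that] ideal.one_imp_carrier primeideal.I_notcarr primeideal.axioms(1) by metis
  then have proper: "carrier R \<noteq> \<Union>C" by auto
  show ?thesis
  proof (rule primeidealI[OF ideal R proper])
    fix a b assume ab: "a \<in> carrier R" "b \<in> carrier R" "a \<otimes> b \<in> \<Union>C"
    then obtain q where "q \<in> C" "a \<otimes> b \<in> q" by auto
    then have "a \<in> q \<or> b \<in> q" using prime ab primeideal.I_prime by metis
    then show "a \<in> \<Union>C \<or> b \<in> \<Union>C" using \<open>q \<in> C\<close> by blast
  qed
qed

lemma maximal_prime_below:
  fixes R (structure)
  assumes R: "cring R" and p: "p \<in> Spec R" "p \<subseteq> I"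
  obtains M where "maximal_in (primes_below R I) M" "p \<subseteq> M"
proof -
  define A where "A = {q \<in> Spec R. q \<subseteq> I \<and> p \<subseteq> q}"
  have "\<exists>M\<in>A. \<forall>x\<in>A. M \<subseteq> x \<longrightarrow> x = M"
  proof (rule subset_Zorn_nonempty)
    show "A \<noteq> {}" using p A_def by auto
    fix C assume ne: "C \<noteq> {}" and ch: "subset.chain A C"
    have "subset.chain {q. primeideal q R} C"
      using ch unfolding pred_on.chain_def Spec_def A_def by auto
    then have "primeideal (\<Union>C) R" using primeideal_Union_chain[OF R _ ne] by auto
    moreover have "\<Union>C \<subseteq> I" "p \<subseteq> \<Union>C"
      using ch ne unfolding pred_on.chain_def A_def by blast+
    ultimately show "\<Union>C \<in> A" unfolding Spec_def A_def by auto
  qed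
  then obtain M where M: "M \<in> A" "\<forall>x\<in>A. M \<subseteq> x \<longrightarrow> x = M" by blast
  then have "p \<subseteq> M" unfolding A_def by auto
  moreover have "maximal_in (primes_below R I) M"
    using M \<open>p \<subseteq> M\<close> unfolding maximal_in_def primes_below_def A_def
    by (metis (no_types, lifting) mem_Collect_eq subset_trans)
  ultimately show ?thesis by (rule that[rotated])
qed

lemma ideal_sum_lub:
  fixes R (structure)
  assumes R: "cring R" and I: "ideal I R" and J: "ideal J R"
  shows "ideal (I <+>\<^bsub>R\<^esub> J) R" and "I \<subseteq> I <+>\<^bsub>R\<^esub> J" and "J \<subseteq> I <+>\<^bsub>R\<^esub> J"
    and "\<And>K. ideal K R \<Longrightarrow> I \<subseteq> K \<Longrightarrow> J \<subseteq> K \<Longrightarrow> I <+>\<^bsub>R\<^esub> J \<subseteq> K"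
proof -
  interpret cring R by fact
  have gen: "Idl (I \<union> J) = I <+>\<^bsub>R\<^esub> J" using union_genideal I J by auto
  have sub: "I \<union> J \<subseteq> carrier R" using I J by (auto dest: ideal.Icarr)
  show "ideal (I <+>\<^bsub>R\<^esub> J) R" using add_ideals I J by auto
  show "I \<subseteq> I <+>\<^bsub>R\<^esub> J" "J \<subseteq> I <+>\<^bsub>R\<^esub> J" using genideal_self[OF sub] gen by auto
  fix K assume "ideal K R" "I \<subseteq> K" "J \<subseteq> K"
  then show "I <+>\<^bsub>R\<^esub> J \<subseteq> K" using genideal_minimal[of K "I \<union> J"] gen by auto
qed

(* (a) \<Rightarrow> (b): two maximal primes inside a proper ideal I have a prime sum inside I. *)
lemma iip_unique_maximal:
  fixes R (structure)
  assumes R: "cring R" and iip: "irreducible_intersection_property R"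
    and I: "ideal I R" "I \<noteq> carrier R" and ne: "primes_below R I \<noteq> {}"
  shows "has_unique_maximal (primes_below R I)"
proof -
  obtain p where "p \<in> Spec R" "p \<subseteq> I" using ne unfolding primes_below_def by auto
  then obtain M where M: "maximal_in (primes_below R I) M"
    using maximal_prime_below[OF R] by metis
  have "N = M" if N: "maximal_in (primes_below R I) N" for N
  proof -
    have MN: "M \<in> Spec R" "N \<in> Spec R" "M \<subseteq> I" "N \<subseteq> I"
      using M N unfolding maximal_in_def primes_below_def by auto
    note sum = ideal_sum_lub[OF R ideal_of_Spec[OF MN(1)] ideal_of_Spec[OF MN(2)]]
    have "M <+>\<^bsub>R\<^esub> N \<subseteq> I" using sum(4)[OF I(1)] MN by auto
    then have "M <+>\<^bsub>R\<^esub> N \<noteq> carrier R" using I ideal.Icarr[OF I(1)] by blast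
    then have "primeideal (M <+>\<^bsub>R\<^esub> N) R"
      using iip MN unfolding irreducible_intersection_property_def Spec_def by auto
    then have "M <+>\<^bsub>R\<^esub> N \<in> primes_below R I"
      using \<open>M <+>\<^bsub>R\<^esub> N \<subseteq> I\<close> unfolding primes_below_def Spec_def by auto
    then have "M <+>\<^bsub>R\<^esub> N = M" and "M <+>\<^bsub>R\<^esub> N = N"
      using M N sum(2,3) unfolding maximal_in_def by auto
    then show "N = M" by simp
  qed
  with M show ?thesis unfolding has_unique_maximal_iff by blast
qed

(* (c) \<Rightarrow> (a), main case: if the primes below p1 + p2 have a unique maximal element,
   that element contains p1 and p2, hence equals p1 + p2, which is therefore prime. *)
lemma unique_maximal_imp_sum_prime:
  fixes R (structure)
  assumes R: "cring R" and p: "p1 \<in> Spec R" "p2 \<in> Spec R"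
    and unique: "has_unique_maximal (primes_below R (p1 <+>\<^bsub>R\<^esub> p2))"
  shows "primeideal (p1 <+>\<^bsub>R\<^esub> p2) R"
proof -
  note sum = ideal_sum_lub[OF R ideal_of_Spec[OF p(1)] ideal_of_Spec[OF p(2)]]
  obtain M1 where M1: "maximal_in (primes_below R (p1 <+>\<^bsub>R\<^esub> p2)) M1" "p1 \<subseteq> M1"
    using maximal_prime_below[OF R p(1) sum(2)] by blast
  obtain M2 where M2: "maximal_in (primes_below R (p1 <+>\<^bsub>R\<^esub> p2)) M2" "p2 \<subseteq> M2"
    using maximal_prime_below[OF R p(2) sum(3)] by blast
  have "M1 = M2" using unique M1 M2 unfolding has_unique_maximal_iff by blast
  moreover have M1_prime: "M1 \<in> Spec R" "M1 \<subseteq> p1 <+>\<^bsub>R\<^esub> p2"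
    using M1 unfolding maximal_in_def primes_below_def by auto
  ultimately have "p1 <+>\<^bsub>R\<^esub> p2 \<subseteq> M1"
    using sum(4)[OF ideal_of_Spec] M1 M2 by auto
  with M1_prime show ?thesis unfolding Spec_def by auto
qed

lemma ideal_sum_self:
  fixes R (structure)
  assumes R: "cring R" and p: "ideal p R"
  shows "p <+>\<^bsub>R\<^esub> p = p"
  using ideal_sum_lub[OF R p p] p by blast

theorem mainTheorem8:
  fixes R (structure)
  assumes "cring R"
  shows "(irreducible_intersection_property R
           \<longleftrightarrow> (\<forall>I. ideal I R \<longrightarrow> I \<noteq> carrier R \<longrightarrow> {p \<in> Spec R. p \<subseteq> I} \<noteq> {} \<longrightarrow>
                  has_unique_maximal {p \<in> Spec R. p \<subseteq> I}))
       \<and> (irreducible_intersection_property R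
           \<longleftrightarrow> (\<forall>p1 p2. p1 \<in> Spec R \<longrightarrow> p2 \<in> Spec R \<longrightarrow> p1 \<noteq> p2 \<longrightarrow> p1 <+> p2 \<noteq> carrier R \<longrightarrow>
                  has_unique_maximal {p \<in> Spec R. p \<subseteq> p1 <+> p2}))"
  unfolding primes_below_def[symmetric]
proof -
  let ?b = "\<forall>I. ideal I R \<longrightarrow> I \<noteq> carrier R \<longrightarrow> primes_below R I \<noteq> {} \<longrightarrow>
              has_unique_maximal (primes_below R I)"
  let ?c = "\<forall>p1 p2. p1 \<in> Spec R \<longrightarrow> p2 \<in> Spec R \<longrightarrow> p1 \<noteq> p2 \<longrightarrow> p1 <+>\<^bsub>R\<^esub> p2 \<noteq> carrier R \<longrightarrow>
              has_unique_maximal (primes_below R (p1 <+>\<^bsub>R\<^esub> p2))"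
  have ab: "irreducible_intersection_property R \<Longrightarrow> ?b"
    using iip_unique_maximal[OF assms] by blast
  have bc: "?b \<Longrightarrow> ?c"
  proof (intro allI impI)
    fix p1 p2 assume b: ?b and p: "p1 \<in> Spec R" "p2 \<in> Spec R" "p1 <+>\<^bsub>R\<^esub> p2 \<noteq> carrier R"
    note sum = ideal_sum_lub[OF assms ideal_of_Spec[OF p(1)] ideal_of_Spec[OF p(2)]]
    have "p1 \<in> primes_below R (p1 <+>\<^bsub>R\<^esub> p2)" using p sum unfolding primes_below_def by auto
    then show "has_unique_maximal (primes_below R (p1 <+>\<^bsub>R\<^esub> p2))" using b sum p by blast
  qed
  have ca: "?c \<Longrightarrow> irreducible_intersection_property R"
    unfolding irreducible_intersection_property_def
    using unique_maximal_imp_sum_prime[OF assms] ideal_sum_self[OF assms]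
    by (metis Spec_def mem_Collect_eq primeideal.axioms(1))
  show "(irreducible_intersection_property R \<longleftrightarrow> ?b) \<and> (irreducible_intersection_property R \<longleftrightarrow> ?c)"
    using ab bc ca by blast
qed

end
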